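(* Let $m$ be a probability measure on $\Sigma\times\Sigma\times\mathbb{P}(\mathbb{R}^m)$ which is stationary for the kernel $\bar K$. Then there exists a unique $\eta\in\mathrm{Prob}(\Sigma\times\mathbb{P}(\mathbb{R}^m))$ such that $m=K\ltimes\eta$, that is, for every $\psi\in C(\Sigma\times\Sigma\times\mathbb{P}(\mathbb{R}^m))$, $$\int \psi(\omega_1,\omega_0,\hat v)\,dm(\omega_1,\omega_0,\hat v)=\int\!\!\int \psi(\omega_1,\omega_0,\hat v)\,dK_{\omega_0}(\omega_1)\,d\eta(\omega_0,\hat v).$$ Moreover, $\eta$ is stationary for the kernel $K_A$.
   Context: $\Sigma$ is a compact metric space, $K\colon\Sigma\to\mathrm{Prob}(\Sigma)$ is a continuous (weak* ) uniformly ergodic Markov kernel, i.e. there are $\mu\in\mathrm{Prob}(\Sigma)$, $C<\infty$, $\sigma\in(0,1)$ with $\|K^n_x-\mu\|_{TV}\le C\sigma^n$ for all $x,n$. $A\colon\Sigma\times\Sigma\to\mathrm{GL}_m(\mathbb{R})$ is a measurable fiber map. $\mathbb{P}(\mathbb{R}^m)$ is real projective space; $\hat v$ is the projective point of $v\ne0$ and $\hat A(y,x)\hat v$ is the projective point of $A(y,x)v$. The kernel $\bar K$ on $\Sigma\times\Sigma\times\mathbb{P}(\mathbb{R}^m)$ is $\bar K(\omega_1,\omega_0,\hat v)=K_{\omega_1}\times\delta_{(\omega_1,\hat A(\omega_1,\omega_0)\hat v)}$, i.e. the law of $(\omega_2,\omega_1,\hat A(\omega_1,\omega_0)\hat v)$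 with $\omega_2\sim K_{\omega_1}$. The kernel $K_A$ on $\Sigma\times\mathbb{P}(\mathbb{R}^m)$ assigns to $(\omega_0,\hat v)$ the law of $(\omega_1,\hat A(\omega_1,\omega_0)\hat v)$ with $\omega_1\sim K_{\omega_0}$. A probability $\nu$ is stationary for a kernel $P$ if $\nu(E)=\int P(z)(E)\,d\nu(z)$ for all Borel $E$. *)

theory Defs
  imports "HOL-Probability.Probability"
begin

text \<open>A nonzero vector v is sent to the orthogonal projection onto its line,
  v v^T / (v . v).  This map identifies P(R^m) (with its quotient topology)
  homeomorphically with the compact set PRm of matrices below.\<close>

definition proj_pt :: "real^'m \<Rightarrow> real^'m^'m" where
  "proj_pt v = (\<chi> i j. (v $ i * v $ j) / (v \<bullet> v))"

definition PRm :: "(real^'m^'m) set" where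
  "PRm = proj_pt ` {v. v \<noteq> 0}"

definition proj_act :: "real^'m^'m \<Rightarrow> real^'m^'m \<Rightarrow> real^'m^'m" where
  "proj_act M P = proj_pt (M *v (SOME v. v \<noteq> 0 \<and> proj_pt v = P))"

definition markov_kernel :: "('a::topological_space \<Rightarrow> 'a measure) \<Rightarrow> bool" where
  "markov_kernel K \<longleftrightarrow> K \<in> borel \<rightarrow>\<^sub>M prob_algebra borel"

definition weak_star_continuous :: "('a::topological_space \<Rightarrow> 'a measure) \<Rightarrow> bool" where
  "weak_star_continuous K \<longleftrightarrow>
     (\<forall>f::'a \<Rightarrow> real. continuous_on UNIV f \<longrightarrow> continuous_on UNIV (\<lambda>x. \<integral>y. f y \<partial>K x))"

fun kpow :: "('a::topological_space \<Rightarrow> 'a measure) \<Rightarrow> nat \<Rightarrow> 'a \<Rightarrow> 'a measure" where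
  "kpow K 0 x = return borel x"
| "kpow K (Suc n) x = kpow K n x \<bind> K"

text \<open>Total variation distance (sup over Borel sets; the factor-2 convention is absorbed in C).\<close>
definition tv_dist :: "'a::topological_space measure \<Rightarrow> 'a measure \<Rightarrow> real" where
  "tv_dist M N = (SUP E \<in> sets (borel :: 'a measure). \<bar>measure M E - measure N E\<bar>)"

definition uniformly_ergodic :: "('a::topological_space \<Rightarrow> 'a measure) \<Rightarrow> bool" where
  "uniformly_ergodic K \<longleftrightarrow>
     (\<exists>\<mu> (C::real) (\<sigma>::real). \<mu> \<in> space (prob_algebra borel) \<and> 0 < \<sigma> \<and> \<sigma> < 1 \<and>
        (\<forall>x n. tv_dist (kpow K n x) \<mu> \<le> C * \<sigma> ^ n))"

definition stationary :: "('b \<Rightarrow> 'b measure) \<Rightarrow> 'b measure \<Rightarrow> bool" where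
  "stationary P \<nu> \<longleftrightarrow> (\<forall>E \<in> sets \<nu>. emeasure \<nu> E = (\<integral>\<^sup>+ z. emeasure (P z) E \<partial>\<nu>))"

definition Kbar ::
  "('a::topological_space \<Rightarrow> 'a measure) \<Rightarrow> ('a \<Rightarrow> 'a \<Rightarrow> real^'m^'m)
    \<Rightarrow> 'a \<times> 'a \<times> (real^'m^'m) \<Rightarrow> ('a \<times> 'a \<times> (real^'m^'m)) measure" where
  "Kbar K A = (\<lambda>(w1, w0, P). distr (K w1) borel (\<lambda>w2. (w2, w1, proj_act (A w1 w0) P)))"

definition KA ::
  "('a::topological_space \<Rightarrow> 'a measure) \<Rightarrow> ('a \<Rightarrow> 'a \<Rightarrow> real^'m^'m)
    \<Rightarrow> 'a \<times> (real^'m^'m) \<Rightarrow> ('a \<times> (real^'m^'m)) measure" where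
  "KA K A = (\<lambda>(w0, P). distr (K w0) borel (\<lambda>w1. (w1, proj_act (A w1 w0) P)))"

end

theory Submission
  imports Defs
begin

text \<open>Write T = fiber_step A, T(w1, w0, P) = (w1, A(w1, w0) P), and G = lift_kernel K,
  G(w0, P) = K_w0 \<times> \<delta>_(w0, P).  Then Kbar = G \<circ> T, while K_A is the push-forward of G by T.
  Stationarity m = m Kbar therefore says m = \<eta> G for \<eta> = T_* m, and \<eta> G is exactly
  K \<ltimes> \<eta>; pushing this identity forward by T gives \<eta> = \<eta> K_A.  Uniqueness holds because
  the law of the last two coordinates under K \<ltimes> \<eta> is \<eta> itself, and a finite Borel
  measure on a metric space is determined by the integrals of bounded continuous functions.\<close>

section \<open>Countable bases and product Borel sets\<close>

lemma compact_UNIV_imp_countable_basis: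
  assumes "compact (UNIV :: 'a::metric_space set)"
  shows "\<exists>B::'a set set. countable B \<and> topological_basis B"
proof -
  have "\<forall>n::nat. \<exists>k. finite k \<and> (UNIV::'a set) \<subseteq> (\<Union>x\<in>k. ball x (1/Suc n))"
    using assms unfolding compact_eq_totally_bounded by simp
  then obtain k where k: "\<And>n. finite (k n)" "\<And>n. (UNIV::'a set) \<subseteq> (\<Union>x\<in>k n. ball x (1/Suc n))"
    by metis
  define B where "B = (\<Union>n. (\<lambda>x. ball x (1/Suc n)) ` k n)"
  have "countable B" unfolding B_def
    by (rule countable_UN[of UNIV], simp) (intro countable_image countable_finite k(1))
  moreover have "topological_basis B"
  proof (rule topological_basisI)
    show "open B'" if "B' \<in> B" for B' using that by (auto simp: B_def)
  next
    fix U and x :: 'a assume "open U" "x \<in> U"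
    then obtain e where e: "e > 0" "ball x e \<subseteq> U" using open_contains_ball by blast
    obtain n where "inverse (real (Suc n)) < e/2" using reals_Archimedean[of "e/2"] e by auto
    then have n: "1 / real (Suc n) < e/2" by (simp add: field_simps)
    from k(2)[of n] obtain y where y: "y \<in> k n" "x \<in> ball y (1/Suc n)" by blast
    have "ball y (1/Suc n) \<subseteq> ball x e"
    proof
      fix z assume "z \<in> ball y (1/Suc n)"
      then have "dist y z < 1/Suc n" by simp
      moreover have "dist x y < 1/Suc n" using y(2) by (simp add: dist_commute)
      ultimately have "dist x z < e" using dist_triangle[of x z y] n by linarith
      then show "z \<in> ball x e" by simp
    qed
    then show "\<exists>B'\<in>B. x \<in> B' \<and> B' \<subseteq> U"
      using y e unfolding B_def by blast
  qed
  ultimately show ?thesis by blast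
qed

lemma countable_basis_prod:
  assumes "\<exists>B::'a::topological_space set set. countable B \<and> topological_basis B"
    and "\<exists>B::'b::topological_space set set. countable B \<and> topological_basis B"
  shows "\<exists>B::('a \<times> 'b) set set. countable B \<and> topological_basis B"
proof -
  obtain Ba :: "'a set set" where "countable Ba" "topological_basis Ba" using assms(1) by blast
  moreover obtain Bb :: "'b set set" where "countable Bb" "topological_basis Bb" using assms(2) by blast
  ultimately show ?thesis
    by (intro exI[of _ "(\<lambda>(a, b). a \<times> b) ` (Ba \<times> Bb)"]) (auto intro: topological_basis_prod)
qed

lemma sets_borel_prod:
  assumes "\<exists>B::'a::topological_space set set. countable B \<and> topological_basis B"
    and "\<exists>B::'b::topological_space set set. countable B \<and> topological_basis B"
  shows "sets (borel :: ('a \<times> 'b) measure) = sets (borel \<Otimes>\<^sub>M borel)"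
proof
  obtain Ba :: "'a set set" where Ba: "countable Ba" "topological_basis Ba" using assms(1) by blast
  obtain Bb :: "'b set set" where Bb: "countable Bb" "topological_basis Bb" using assms(2) by blast
  let ?P = "(\<lambda>(a, b). a \<times> b) ` (Ba \<times> Bb)"
  have "countable ?P" "topological_basis ?P" using Ba Bb by (auto intro: topological_basis_prod)
  then have eq: "(borel :: ('a \<times> 'b) measure) = sigma UNIV ?P" by (rule borel_eq_countable_basis)
  have "?P \<subseteq> sets ((borel::'a measure) \<Otimes>\<^sub>M (borel::'b measure))"
    using Ba(2) Bb(2) by (auto intro!: pair_measureI borel_open dest: topological_basis_open)
  moreover have "UNIV \<in> sets ((borel::'a measure) \<Otimes>\<^sub>M (borel::'b measure))"
    using sets.top[of "(borel::'a measure) \<Otimes>\<^sub>M (borel::'b measure)"] by (simp add: space_pair_measure)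
  ultimately have "sigma_sets UNIV ?P \<subseteq> sets ((borel::'a measure) \<Otimes>\<^sub>M (borel::'b measure))"
    by (intro sets.sigma_sets_subset')
  then show "sets (borel :: ('a \<times> 'b) measure) \<subseteq> sets (borel \<Otimes>\<^sub>M borel)"
    by (subst eq) simp
next
  have "id \<in> measurable (borel :: ('a \<times> 'b) measure) (borel \<Otimes>\<^sub>M borel)"
    unfolding measurable_pair_iff
    by (auto intro!: borel_measurable_continuous_onI continuous_intros simp: comp_def)
  then show "sets (borel \<Otimes>\<^sub>M borel) \<subseteq> sets (borel :: ('a \<times> 'b) measure)"
    using measurable_sets[of id borel "borel \<Otimes>\<^sub>M borel"] by (fastforce simp: space_pair_measure)
qed

lemma borel_measurable_vec:
  fixes f :: "'x \<Rightarrow> 'b::euclidean_space ^ 'n"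
  assumes "\<And>i. (\<lambda>x. f x $ i) \<in> borel_measurable M"
  shows "f \<in> borel_measurable M"
proof -
  have eq: "f = (\<lambda>x. \<Sum>i\<in>UNIV. axis i (f x $ i))"
    by (auto simp: vec_eq_iff sum_component axis_def if_distrib cong: if_cong)
  have axis: "continuous_on UNIV (axis i :: 'b \<Rightarrow> 'b^'n)" for i
  proof (unfold axis_def, rule continuous_on_vec_lambda)
    show "continuous_on UNIV (\<lambda>x. if j = i then x else 0)" for j by (cases "j = i") auto
  qed
  show ?thesis
    by (subst eq, intro borel_measurable_sum borel_measurable_continuous_on[OF axis] assms)
qed

lemma borel_measurable_vec_nth [measurable (raw)]:
  fixes f :: "'x \<Rightarrow> 'b::real_normed_vector ^ 'n"
  assumes "f \<in> borel_measurable M"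
  shows "(\<lambda>x. f x $ i) \<in> borel_measurable M"
proof -
  have "continuous_on UNIV (\<lambda>x::'b^'n. x $ i)"
    by (intro continuous_intros)
  then show ?thesis using borel_measurable_continuous_on assms by blast
qed

section \<open>The projective action\<close>

text \<open>The matrix M P M^T / tr (M P M^T): a choice-free, hence measurable, expression for
  proj_act M on PRm.\<close>
definition proj_act_formula :: "real^'m^'m \<Rightarrow> real^'m^'m \<Rightarrow> real^'m^'m" where
  "proj_act_formula M P = (\<chi> i j. (\<Sum>k\<in>UNIV. \<Sum>l\<in>UNIV. M$i$k * P$k$l * M$j$l) /
      (\<Sum>r\<in>UNIV. \<Sum>k\<in>UNIV. \<Sum>l\<in>UNIV. M$r$k * P$k$l * M$r$l))"

lemma proj_act_formula_proj_pt:
  fixes v :: "real^'m"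
  assumes "v \<noteq> 0"
  shows "proj_act_formula M (proj_pt v) = proj_pt (M *v v)"
proof -
  define s where "s = v \<bullet> v"
  have s: "s \<noteq> 0" using assms by (simp add: s_def)
  define u where "u = M *v v"
  have u: "u $ i = (\<Sum>k\<in>UNIV. M$i$k * v$k)" for i by (simp add: u_def matrix_vector_mult_def)
  have bilinear: "(\<Sum>k\<in>UNIV. \<Sum>l\<in>UNIV. a k * (v$k * v$l / s) * b l)
      = (\<Sum>k\<in>UNIV. a k * v$k) * (\<Sum>l\<in>UNIV. b l * v$l) / s" for a b :: "'m \<Rightarrow> real"
    by (simp add: sum_product sum_divide_distrib mult_ac)
  have num: "(\<Sum>k\<in>UNIV. \<Sum>l\<in>UNIV. M$i$k * proj_pt v$k$l * M$j$l) = u$i * u$j / s" for i j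
    using bilinear[of "\<lambda>k. M$i$k" "\<lambda>l. M$j$l"] by (simp add: proj_pt_def s_def u algebra_simps)
  have uu: "u \<bullet> u = (\<Sum>r\<in>UNIV. u$r * u$r)" by (simp add: inner_vec_def)
  have den: "(\<Sum>r\<in>UNIV. u$r * u$r / s) = (u \<bullet> u) / s"
    unfolding uu by (simp only: sum_divide_distrib)
  show ?thesis
    unfolding proj_act_formula_def num
    using s by (simp add: proj_pt_def u_def[symmetric] vec_eq_iff den del: divide_divide_eq_left)
qed

lemma proj_act_eq_formula:
  assumes "P \<in> PRm"
  shows "proj_act M P = proj_act_formula M P"
proof -
  have ex: "\<exists>v. v \<noteq> 0 \<and> proj_pt v = P" using assms by (auto simp: PRm_def)
  define w where "w = (SOME v. v \<noteq> 0 \<and> proj_pt v = P)"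
  have w: "w \<noteq> 0" "proj_pt w = P" using someI_ex[OF ex] by (auto simp: w_def)
  show ?thesis
    unfolding proj_act_def w_def[symmetric] using proj_act_formula_proj_pt[OF w(1), of M] w(2) by simp
qed

lemma proj_act_in_PRm:
  assumes "invertible M" "P \<in> PRm"
  shows "proj_act M P \<in> PRm"
proof -
  have ex: "\<exists>v. v \<noteq> 0 \<and> proj_pt v = P" using assms by (auto simp: PRm_def)
  define w where "w = (SOME v. v \<noteq> 0 \<and> proj_pt v = P)"
  have w: "w \<noteq> 0" using someI_ex[OF ex] by (auto simp: w_def)
  obtain M' where M': "M' ** M = mat 1" using assms(1) by (auto simp: invertible_def)
  have "M' *v (M *v w) = w" by (simp add: matrix_vector_mul_assoc M')
  then have "M *v w \<noteq> 0" using w by auto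
  then show ?thesis unfolding proj_act_def w_def[symmetric] PRm_def by auto
qed

lemma proj_pt_scaleR:
  fixes v :: "real^'m"
  assumes "c \<noteq> 0"
  shows "proj_pt (c *\<^sub>R v) = proj_pt v"
  using assms by (simp add: proj_pt_def vec_eq_iff inner_scaleR_left inner_scaleR_right power2_eq_square)

lemma PRm_eq_proj_pt_sphere: "(PRm :: (real^'m^'m) set) = proj_pt ` sphere 0 1"
proof
  show "proj_pt ` sphere 0 1 \<subseteq> (PRm :: (real^'m^'m) set)" unfolding PRm_def by auto
next
  show "(PRm :: (real^'m^'m) set) \<subseteq> proj_pt ` sphere 0 1"
  proof
    fix P :: "real^'m^'m" assume "P \<in> PRm"
    then obtain v :: "real^'m" where v: "v \<noteq> 0" "P = proj_pt v" by (auto simp: PRm_def)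
    have "proj_pt ((1 / norm v) *\<^sub>R v) = P" using v by (subst proj_pt_scaleR) auto
    moreover have "(1 / norm v) *\<^sub>R v \<in> sphere 0 1" using v by (simp add: norm_scaleR)
    ultimately show "P \<in> proj_pt ` sphere 0 1" by blast
  qed
qed

lemma compact_PRm: "compact (PRm :: (real^'m^'m) set)"
proof -
  have "continuous_on (sphere 0 1) (proj_pt :: real^'m \<Rightarrow> real^'m^'m)"
    unfolding proj_pt_def
    by (intro continuous_on_vec_lambda continuous_intros) (auto simp flip: power2_norm_eq_inner)
  then show ?thesis unfolding PRm_eq_proj_pt_sphere by (intro compact_continuous_image compact_sphere)
qed

lemma closed_PRm: "closed (PRm :: (real^'m^'m) set)"
  using compact_PRm by (rule compact_imp_closed)

lemma borel_measurable_proj_pt: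
  fixes g :: "'x \<Rightarrow> real^'m"
  assumes [measurable]: "g \<in> borel_measurable M"
  shows "(\<lambda>x. proj_pt (g x)) \<in> borel_measurable M"
  unfolding proj_pt_def inner_vec_def
  by (intro borel_measurable_vec) (simp, measurable)

lemma borel_measurable_proj_act:
  "(\<lambda>(M, P). proj_act M P) \<in> borel_measurable (borel :: ((real^'m^'m) \<times> (real^'m^'m)) measure)"
proof -
  have eq: "(\<lambda>(M, P). proj_act M P) = (\<lambda>p::(real^'m^'m) \<times> (real^'m^'m).
      if p \<in> UNIV \<times> PRm then proj_act_formula (fst p) (snd p) else proj_pt (fst p *v (SOME v. False)))"
  proof -
    \<comment> \<open>Off PRm the choice in proj_act has no witness, leaving a junk value that depends on M only.\<close>
    have "proj_act M P = proj_pt (M *v (SOME v. False))" if "P \<notin> PRm" for M P :: "real^'m^'m"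
    proof -
      have "(\<lambda>v. v \<noteq> 0 \<and> proj_pt v = P) = (\<lambda>v. False)" using that by (auto simp: PRm_def)
      then show ?thesis by (simp add: proj_act_def)
    qed
    then show ?thesis by (auto simp: proj_act_eq_formula fun_eq_iff)
  qed
  have "(\<lambda>p::(real^'m^'m) \<times> (real^'m^'m). proj_act_formula (fst p) (snd p)) \<in> borel_measurable borel"
    unfolding proj_act_formula_def borel_prod[symmetric]
    by (intro borel_measurable_vec) (simp, measurable)
  moreover have "(\<lambda>p::(real^'m^'m) \<times> (real^'m^'m). proj_pt (fst p *v (SOME v. False))) \<in> borel_measurable borel"
    unfolding borel_prod[symmetric]
    by (intro borel_measurable_proj_pt borel_measurable_vec) (simp add: matrix_vector_mult_def, measurable)
  moreover have "(UNIV \<times> PRm) \<inter> space borel \<in> sets (borel :: ((real^'m^'m) \<times> (real^'m^'m)) measure)"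
    by (simp add: borel_closed closed_Times closed_PRm)
  ultimately show ?thesis unfolding eq by (rule measurable_If_set)
qed

section \<open>Measures, kernels and stationarity\<close>

lemma tendsto_integral_cutoff_closed:
  fixes C :: "'a::metric_space set"
  assumes M: "finite_measure M" "sets M = sets borel" and C: "closed C" "C \<noteq> {}"
  shows "(\<lambda>n. \<integral>x. max 0 (1 - real (Suc n) * infdist x C) \<partial>M) \<longlonglongrightarrow> measure M C"
proof -
  interpret finite_measure M by fact
  define f where "f = (\<lambda>n x. max 0 (1 - real (Suc n) * infdist x C))"
  have meas: "f n \<in> borel_measurable M" for n
    unfolding measurable_cong_sets[OF M(2) refl] f_def
    by (intro borel_measurable_continuous_onI continuous_intros)
  have lim: "(\<lambda>n. f n x) \<longlonglongrightarrow> indicator C x" for x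
  proof (cases "x \<in> C")
    case True
    then show ?thesis by (simp add: f_def)
  next
    case False
    have d: "infdist x C > 0"
      using False in_closed_iff_infdist_zero[OF C] infdist_nonneg[of x C] by auto
    obtain N where N: "1 < real N * infdist x C" using ex_less_of_nat_mult[OF d] by blast
    have "f n x = 0" if "N \<le> n" for n
    proof -
      have "real N * infdist x C \<le> real (Suc n) * infdist x C"
        using d that by (intro mult_right_mono) auto
      then show ?thesis using N by (simp add: f_def)
    qed
    then have "(\<lambda>n. f n x) \<longlonglongrightarrow> 0"
      by (intro tendsto_eventually) (auto simp: eventually_sequentially)
    then show ?thesis using False by simp
  qed
  have "(\<lambda>n. \<integral>x. f n x \<partial>M) \<longlonglongrightarrow> (\<integral>x. indicator C x \<partial>M)"
  proof (rule integral_dominated_convergence[where w="\<lambda>_. 1"])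
    show "indicator C \<in> borel_measurable M"
      using C(1) by (simp add: measurable_cong_sets[OF M(2) refl] borel_closed)
    show "\<And>i. AE x in M. norm (f i x) \<le> 1" by (auto simp: f_def infdist_nonneg)
  qed (use meas lim in auto)
  moreover have "(\<integral>x. indicator C x \<partial>M) = measure M C"
    using C(1) M(2) by (simp add: borel_closed)
  ultimately show ?thesis by (simp add: f_def)
qed

lemma measure_eqI_integral_bounded_continuous:
  fixes M N :: "'a::metric_space measure"
  assumes M: "finite_measure M" "sets M = sets borel" and N: "finite_measure N" "sets N = sets borel"
    and integral_eq: "\<And>f :: 'a \<Rightarrow> real. continuous_on UNIV f \<Longrightarrow> bounded (range f) \<Longrightarrow>
      (\<integral>x. f x \<partial>M) = (\<integral>x. f x \<partial>N)"
  shows "M = N"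
proof (rule measure_eqI_generator_eq[where E="Collect closed" and \<Omega>=UNIV and A="\<lambda>_. UNIV"])
  have sets_closed: "sets (borel :: 'a measure) = sigma_sets UNIV (Collect closed)"
    by (subst borel_eq_closed) (simp add: sets_measure_of)
  then show "sets M = sigma_sets UNIV (Collect closed)" "sets N = sigma_sets UNIV (Collect closed)"
    using M(2) N(2) by simp_all
  show "Int_stable (Collect closed :: 'a set set)"
    by (auto simp: Int_stable_def)
  show "emeasure M UNIV \<noteq> \<infinity>" for i :: nat
    using finite_measure.emeasure_finite[OF M(1)] by simp
  show "emeasure M C = emeasure N C" if "C \<in> Collect closed" for C
  proof (cases "C = {}")
    case False
    let ?f = "\<lambda>n x. max 0 (1 - real (Suc n) * infdist x C)"
    have "continuous_on UNIV (?f n)" for n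
      by (intro continuous_intros)
    moreover have "bounded (range (?f n))" for n
      unfolding bounded_iff by (intro exI[of _ 1]) (auto simp: infdist_nonneg)
    ultimately have "(\<integral>x. ?f n x \<partial>M) = (\<integral>x. ?f n x \<partial>N)" for n
      by (rule integral_eq)
    moreover have "closed C" using that by simp
    ultimately have "measure M C = measure N C"
      using LIMSEQ_unique[OF tendsto_integral_cutoff_closed[OF M _ False]]
        tendsto_integral_cutoff_closed[OF N _ False] by simp
    then show ?thesis
      by (simp add: finite_measure.emeasure_eq_measure[OF M(1)] finite_measure.emeasure_eq_measure[OF N(1)])
  qed simp
qed (auto simp: space_borel)

lemma (in prob_space) set_integral_eq_integral_if_prob_1:
  assumes "emeasure M S = 1" "S \<in> events" "f \<in> borel_measurable M"
  shows "(LINT x:S|M. f x) = (\<integral>x. f x \<partial>M)"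
proof -
  have "AE x in M. x \<in> S"
    using assms(1,2) by (intro AE_prob_1) (simp add: emeasure_eq_measure)
  then show ?thesis
    unfolding set_lebesgue_integral_def
    by (intro integral_cong_AE) (use assms(2,3) in \<open>auto simp: indicator_def\<close>)
qed

lemma stationary_iff_bind_eq:
  assumes P: "P \<in> M \<rightarrow>\<^sub>M subprob_algebra M" and ne: "space M \<noteq> {}"
  shows "stationary P M \<longleftrightarrow> M \<bind> P = M"
proof -
  have sets: "sets (M \<bind> P) = sets M"
    using measurable_space[OF P] ne by (auto simp: space_subprob_algebra)
  have bind: "emeasure (M \<bind> P) E = (\<integral>\<^sup>+ z. emeasure (P z) E \<partial>M)" if "E \<in> sets M" for E
    using emeasure_bind[OF ne P that] .
  show ?thesis
  proof
    assume "stationary P M"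
    then show "M \<bind> P = M"
      by (intro measure_eqI) (auto simp: sets bind stationary_def)
  next
    assume "M \<bind> P = M"
    then show "stationary P M"
      using bind unfolding stationary_def by metis
  qed
qed

lemma stationary_comp_kernel:
  assumes T: "T \<in> X \<rightarrow>\<^sub>M Y" and G: "G \<in> Y \<rightarrow>\<^sub>M subprob_algebra X"
    and m: "prob_space m" "sets m = sets X"
    and stat: "stationary (\<lambda>z. G (T z)) m"
  shows "m = distr m Y T \<bind> G"
    and "stationary (\<lambda>q. distr (G q) Y T) (distr m Y T)"
proof -
  have Tm: "T \<in> m \<rightarrow>\<^sub>M Y" using T by (simp add: measurable_cong_sets[OF m(2) refl])
  have ne: "space m \<noteq> {}" using m(1) prob_space.not_empty by blast
  have "(\<lambda>z. G (T z)) \<in> m \<rightarrow>\<^sub>M subprob_algebra m"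
    using measurable_compose[OF Tm G] subprob_algebra_cong[OF m(2)] by simp
  then have "m \<bind> (\<lambda>z. G (T z)) = m"
    using stat ne by (simp add: stationary_iff_bind_eq)
  then show eq: "m = distr m Y T \<bind> G"
    using bind_distr[OF Tm G ne] by simp
  let ?\<eta> = "distr m Y T"
  have ne\<eta>: "space ?\<eta> \<noteq> {}" using ne measurable_space[OF Tm] by auto
  have G\<eta>: "G \<in> ?\<eta> \<rightarrow>\<^sub>M subprob_algebra X"
    using G by (simp add: measurable_cong_sets[OF sets_distr refl])
  have "(\<lambda>q. distr (G q) Y T) \<in> ?\<eta> \<rightarrow>\<^sub>M subprob_algebra ?\<eta>"
    using measurable_compose[OF G\<eta> measurable_distr[OF T]]
    by (simp add: subprob_algebra_cong[OF sets_distr[of m Y T]])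
  moreover have "?\<eta> \<bind> (\<lambda>q. distr (G q) Y T) = ?\<eta>"
    using distr_bind[OF G\<eta> ne\<eta> T] eq by simp
  ultimately show "stationary (\<lambda>q. distr (G q) Y T) ?\<eta>"
    using ne\<eta> by (simp add: stationary_iff_bind_eq)
qed

section \<open>The factorisation of Kbar\<close>

text \<open>lift_kernel K q = K_(fst q) \<times> \<delta>_q, so that \<eta> \<bind> lift_kernel K is K \<ltimes> \<eta>.\<close>
definition lift_kernel ::
  "('a::topological_space \<Rightarrow> 'a measure) \<Rightarrow> 'a \<times> 'b::topological_space \<Rightarrow> ('a \<times> 'a \<times> 'b) measure"
  where "lift_kernel K q = distr (K (fst q)) borel (\<lambda>w. (w, q))"

definition fiber_step :: "('a \<Rightarrow> 'a \<Rightarrow> real^'m^'m) \<Rightarrow> 'a \<times> 'a \<times> (real^'m^'m) \<Rightarrow> 'a \<times> (real^'m^'m)"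
  where "fiber_step A z = (fst z, proj_act (A (fst z) (fst (snd z))) (snd (snd z)))"

lemma Kbar_eq_lift_kernel_fiber_step: "Kbar K A = (\<lambda>z. lift_kernel K (fiber_step A z))"
  by (auto simp: Kbar_def lift_kernel_def fiber_step_def fun_eq_iff)

locale markov_cocycle =
  fixes K :: "'a::metric_space \<Rightarrow> 'a measure" and A :: "'a \<Rightarrow> 'a \<Rightarrow> real^'m^'m"
  assumes compact_space: "compact (UNIV :: 'a set)"
    and kernel: "markov_kernel K"
    and A_measurable: "(\<lambda>(y, x). A y x) \<in> borel_measurable borel"
    and A_invertible: "\<And>y x. invertible (A y x)"
begin

lemma prob_space_K: "prob_space (K x)" and sets_K: "sets (K x) = sets borel"
  using measurable_space[OF kernel[unfolded markov_kernel_def], of x]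
  by (auto simp: space_prob_algebra)

lemma countable_basis: "\<exists>B::'a set set. countable B \<and> topological_basis B"
  using compact_space by (rule compact_UNIV_imp_countable_basis)

lemma sets_borel_pair: "sets (borel :: ('a \<times> (real^'m^'m)) measure) = sets (borel \<Otimes>\<^sub>M borel)"
  using countable_basis ex_countable_basis by (rule sets_borel_prod)

lemma sets_borel_triple:
  "sets (borel :: ('a \<times> 'a \<times> (real^'m^'m)) measure) = sets (borel \<Otimes>\<^sub>M borel)"
  using countable_basis countable_basis_prod[OF countable_basis ex_countable_basis]
  by (rule sets_borel_prod)

lemma measurable_fiber_step:
  "fiber_step A \<in> (borel :: ('a \<times> 'a \<times> (real^'m^'m)) measure) \<rightarrow>\<^sub>M borel"
proof -
  have "(\<lambda>z::'a \<times> 'a \<times> (real^'m^'m). (fst z, fst (snd z))) \<in> borel \<rightarrow>\<^sub>M borel"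
    by (intro borel_measurable_continuous_onI continuous_intros)
  from measurable_compose[OF this A_measurable]
  have "(\<lambda>z::'a \<times> 'a \<times> (real^'m^'m). A (fst z) (fst (snd z))) \<in> borel_measurable borel"
    by simp
  moreover have "(\<lambda>z::'a \<times> 'a \<times> (real^'m^'m). snd (snd z)) \<in> borel_measurable borel"
    by (intro borel_measurable_continuous_onI continuous_intros)
  ultimately have "(\<lambda>z::'a \<times> 'a \<times> (real^'m^'m). (A (fst z) (fst (snd z)), snd (snd z)))
      \<in> borel_measurable borel"
    by (rule borel_measurable_Pair)
  from measurable_compose[OF this borel_measurable_proj_act]
  have "(\<lambda>z::'a \<times> 'a \<times> (real^'m^'m). proj_act (A (fst z) (fst (snd z))) (snd (snd z)))
      \<in> borel_measurable borel"
    by simp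
  moreover have "(\<lambda>z::'a \<times> 'a \<times> (real^'m^'m). fst z) \<in> borel \<rightarrow>\<^sub>M borel"
    by (intro borel_measurable_continuous_onI continuous_intros)
  ultimately have "fiber_step A \<in> borel \<rightarrow>\<^sub>M (borel \<Otimes>\<^sub>M borel)"
    unfolding fiber_step_def by (intro measurable_Pair)
  then show ?thesis
    by (simp add: measurable_cong_sets[OF refl sets_borel_pair])
qed

lemma measurable_lift_kernel:
  "lift_kernel K \<in> (borel :: ('a \<times> (real^'m^'m)) measure) \<rightarrow>\<^sub>M subprob_algebra borel"
proof -
  have "(\<lambda>(q, w). (w, q)) \<in> ((borel :: ('a \<times> (real^'m^'m)) measure) \<Otimes>\<^sub>M (borel :: 'a measure))
      \<rightarrow>\<^sub>M (borel \<Otimes>\<^sub>M borel)"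
    by measurable
  then have swap: "(\<lambda>(q, w). (w, q)) \<in> ((borel :: ('a \<times> (real^'m^'m)) measure) \<Otimes>\<^sub>M (borel :: 'a measure))
      \<rightarrow>\<^sub>M borel"
    by (simp add: measurable_cong_sets[OF refl sets_borel_triple])
  have "(\<lambda>q::'a \<times> (real^'m^'m). fst q) \<in> borel \<rightarrow>\<^sub>M borel"
    by (intro borel_measurable_continuous_onI continuous_intros)
  from measurable_compose[OF this measurable_prob_algebraD[OF kernel[unfolded markov_kernel_def]]]
  have "(\<lambda>q::'a \<times> (real^'m^'m). K (fst q)) \<in> borel \<rightarrow>\<^sub>M subprob_algebra borel"
    by simp
  then show ?thesis
    unfolding lift_kernel_def[abs_def] by (rule measurable_distr2[OF swap])
qed

lemma measurable_Pair_const_K: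
  "(\<lambda>w. (w, q)) \<in> K x \<rightarrow>\<^sub>M (borel :: ('a \<times> 'a \<times> (real^'m^'m)) measure)"
  unfolding measurable_cong_sets[OF sets_K refl]
  by (intro borel_measurable_continuous_onI continuous_intros)

lemma KA_eq_distr_lift_kernel: "KA K A q = distr (lift_kernel K q) borel (fiber_step A)"
proof -
  obtain w0 P where q: "q = (w0, P)" by (cases q)
  have "distr (lift_kernel K q) borel (fiber_step A) = distr (K w0) borel (fiber_step A \<circ> (\<lambda>w. (w, q)))"
    unfolding lift_kernel_def
    using q by (simp add: distr_distr[OF measurable_fiber_step measurable_Pair_const_K])
  also have "fiber_step A \<circ> (\<lambda>w. (w, q)) = (\<lambda>w1. (w1, proj_act (A w1 w0) P))"
    using q by (simp add: fiber_step_def comp_def)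
  finally show ?thesis using q by (simp add: KA_def)
qed

lemma emeasure_distr_fiber_step_PRm:
  assumes m: "m \<in> space (prob_algebra borel)" and supp: "emeasure m (UNIV \<times> UNIV \<times> PRm) = 1"
  shows "emeasure (distr m borel (fiber_step A)) (UNIV \<times> PRm) = 1"
proof -
  have sets_m: "sets m = sets borel" and prob_m: "prob_space m"
    using m by (auto simp: space_prob_algebra)
  have Tm: "fiber_step A \<in> m \<rightarrow>\<^sub>M borel"
    using measurable_fiber_step by (simp add: measurable_cong_sets[OF sets_m refl])
  have PRm_sets: "UNIV \<times> PRm \<in> sets (borel :: ('a \<times> (real^'m^'m)) measure)"
    by (simp add: borel_closed closed_Times closed_PRm)
  have "UNIV \<times> UNIV \<times> PRm \<subseteq> fiber_step A -` (UNIV \<times> PRm) \<inter> space m"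
    by (auto simp: fiber_step_def sets_eq_imp_space_eq[OF sets_m] intro!: proj_act_in_PRm A_invertible)
  then have "1 \<le> emeasure m (fiber_step A -` (UNIV \<times> PRm) \<inter> space m)"
    using supp measurable_sets[OF Tm PRm_sets] by (metis emeasure_mono)
  also have "\<dots> = emeasure (distr m borel (fiber_step A)) (UNIV \<times> PRm)"
    by (rule emeasure_distr[OF Tm PRm_sets, symmetric])
  finally show ?thesis
    using prob_space.emeasure_le_1[OF prob_space.prob_space_distr[OF prob_m Tm]] by (simp add: antisym)
qed

lemma set_integral_bind_lift_kernel:
  fixes \<psi> :: "'a \<times> 'a \<times> (real^'m^'m) \<Rightarrow> real"
  assumes \<eta>: "\<eta> \<in> space (prob_algebra borel)" and \<psi>: "continuous_on (UNIV \<times> UNIV \<times> PRm) \<psi>"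
  shows "(LINT z : UNIV \<times> UNIV \<times> PRm | \<eta> \<bind> lift_kernel K. \<psi> z) =
    (LINT q : UNIV \<times> PRm | \<eta>. (\<integral>w1. \<psi> (w1, fst q, snd q) \<partial>K (fst q)))"
proof -
  have sets_\<eta>: "sets \<eta> = sets borel" and prob_\<eta>: "prob_space \<eta>"
    using \<eta> by (auto simp: space_prob_algebra)
  have G: "lift_kernel K \<in> \<eta> \<rightarrow>\<^sub>M subprob_algebra borel"
    using measurable_lift_kernel by (simp add: measurable_cong_sets[OF sets_\<eta> refl])
  have S: "UNIV \<times> UNIV \<times> PRm \<in> sets (borel :: ('a \<times> 'a \<times> (real^'m^'m)) measure)"
    by (simp add: borel_closed closed_Times closed_PRm)
  have "compact (UNIV \<times> UNIV \<times> PRm :: ('a \<times> 'a \<times> (real^'m^'m)) set)"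
    by (intro compact_Times compact_PRm compact_space)
  then obtain c where c: "\<And>z. z \<in> UNIV \<times> UNIV \<times> PRm \<Longrightarrow> norm (\<psi> z) \<le> c"
    using compact_continuous_image[OF \<psi>] compact_imp_bounded by (fastforce simp: bounded_iff)
  define h where "h = (\<lambda>z. indicator (UNIV \<times> UNIV \<times> PRm) z *\<^sub>R \<psi> z)"
  have h: "h \<in> borel_measurable borel"
    unfolding h_def by (rule borel_measurable_continuous_on_indicator[OF S \<psi>])
  have bounded: "\<bar>h z\<bar> \<le> max c 0" if "z \<in> space borel" for z
    using c[of z] by (auto simp: h_def indicator_def)
  have "AE q in \<eta>. emeasure (lift_kernel K q) (space (lift_kernel K q)) \<le> ennreal 1"
    using measurable_space[OF G]
    by (auto simp: space_subprob_algebra intro!: subprob_space.emeasure_space_le_1)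
  moreover have "finite_measure \<eta>"
    using prob_\<eta> by (simp add: prob_space_def)
  ultimately have "(\<integral>z. h z \<partial>(\<eta> \<bind> lift_kernel K)) = (\<integral>q. (\<integral>z. h z \<partial>lift_kernel K q) \<partial>\<eta>)"
    by (intro integral_bind[OF h bounded G])
  also have "\<dots> = (LINT q : UNIV \<times> PRm | \<eta>. (\<integral>w1. \<psi> (w1, fst q, snd q) \<partial>K (fst q)))"
    unfolding set_lebesgue_integral_def
  proof (rule Bochner_Integration.integral_cong[OF refl])
    fix q :: "'a \<times> (real^'m^'m)"
    have "(\<integral>z. h z \<partial>lift_kernel K q) = (\<integral>w. h (w, q) \<partial>K (fst q))"
      unfolding lift_kernel_def by (rule integral_distr[OF measurable_Pair_const_K h])
    also have "\<dots> = (\<integral>w. indicator (UNIV \<times> PRm) q *\<^sub>R \<psi> (w, q) \<partial>K (fst q))"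
      by (simp add: h_def indicator_def)
    finally show "(\<integral>z. h z \<partial>lift_kernel K q) =
        indicator (UNIV \<times> PRm) q *\<^sub>R (\<integral>w1. \<psi> (w1, fst q, snd q) \<partial>K (fst q))"
      by simp
  qed
  finally show ?thesis
    by (simp add: set_lebesgue_integral_def h_def)
qed

lemma measure_eqI_set_integral_lift_kernel:
  assumes \<eta>: "\<eta> \<in> space (prob_algebra borel)" "emeasure \<eta> (UNIV \<times> PRm) = 1"
    and \<eta>': "\<eta>' \<in> space (prob_algebra borel)" "emeasure \<eta>' (UNIV \<times> PRm) = 1"
    and eq: "\<And>\<psi> :: 'a \<times> 'a \<times> (real^'m^'m) \<Rightarrow> real. continuous_on (UNIV \<times> UNIV \<times> PRm) \<psi> \<Longrightarrow>
      (LINT q : UNIV \<times> PRm | \<eta>. (\<integral>w1. \<psi> (w1, fst q, snd q) \<partial>K (fst q))) =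
      (LINT q : UNIV \<times> PRm | \<eta>'. (\<integral>w1. \<psi> (w1, fst q, snd q) \<partial>K (fst q)))"
  shows "\<eta> = \<eta>'"
proof -
  have sets: "sets \<eta> = sets borel" "sets \<eta>' = sets borel"
    and prob: "prob_space \<eta>" "prob_space \<eta>'"
    using \<eta>(1) \<eta>'(1) by (auto simp: space_prob_algebra)
  have PRm_sets: "UNIV \<times> PRm \<in> sets (borel :: ('a \<times> (real^'m^'m)) measure)"
    by (simp add: borel_closed closed_Times closed_PRm)
  show ?thesis
  proof (rule measure_eqI_integral_bounded_continuous)
    fix f :: "'a \<times> (real^'m^'m) \<Rightarrow> real" assume f: "continuous_on UNIV f"
    have "continuous_on (UNIV \<times> UNIV \<times> PRm) (\<lambda>z. f (snd z))"
      by (rule continuous_on_compose2[OF f]) (auto intro: continuous_intros)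
    then have "(LINT q : UNIV \<times> PRm | \<eta>. f q) = (LINT q : UNIV \<times> PRm | \<eta>'. f q)"
      using eq[of "\<lambda>z. f (snd z)"] by (simp add: prob_space.prob_space[OF prob_space_K])
    moreover have "f \<in> borel_measurable borel"
      using f by (rule borel_measurable_continuous_onI)
    then have "f \<in> borel_measurable \<eta>" "f \<in> borel_measurable \<eta>'"
      by (simp_all add: measurable_cong_sets[OF sets(1) refl] measurable_cong_sets[OF sets(2) refl])
    moreover have "UNIV \<times> PRm \<in> sets \<eta>" "UNIV \<times> PRm \<in> sets \<eta>'"
      using PRm_sets sets by simp_all
    ultimately show "(\<integral>x. f x \<partial>\<eta>) = (\<integral>x. f x \<partial>\<eta>')"
      using prob_space.set_integral_eq_integral_if_prob_1[OF prob(1) \<eta>(2)]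
        prob_space.set_integral_eq_integral_if_prob_1[OF prob(2) \<eta>'(2)] by metis
  qed (use sets prob in \<open>auto simp: prob_space_def\<close>)
qed

lemma bind_lift_kernel_unique:
  assumes \<eta>: "\<eta> \<in> space (prob_algebra borel)" "emeasure \<eta> (UNIV \<times> PRm) = 1"
    and \<eta>': "\<eta>' \<in> space (prob_algebra borel)" "emeasure \<eta>' (UNIV \<times> PRm) = 1"
    and eq: "\<And>\<psi> :: 'a \<times> 'a \<times> (real^'m^'m) \<Rightarrow> real. continuous_on (UNIV \<times> UNIV \<times> PRm) \<psi> \<Longrightarrow>
      (LINT z : UNIV \<times> UNIV \<times> PRm | \<eta> \<bind> lift_kernel K. \<psi> z) =
      (LINT q : UNIV \<times> PRm | \<eta>'. (\<integral>w1. \<psi> (w1, fst q, snd q) \<partial>K (fst q)))"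
  shows "\<eta>' = \<eta>"
proof (rule measure_eqI_set_integral_lift_kernel[OF \<eta>' \<eta>])
  fix \<psi> :: "'a \<times> 'a \<times> (real^'m^'m) \<Rightarrow> real" assume \<psi>: "continuous_on (UNIV \<times> UNIV \<times> PRm) \<psi>"
  show "(LINT q : UNIV \<times> PRm | \<eta>'. (\<integral>w1. \<psi> (w1, fst q, snd q) \<partial>K (fst q))) =
      (LINT q : UNIV \<times> PRm | \<eta>. (\<integral>w1. \<psi> (w1, fst q, snd q) \<partial>K (fst q)))"
    by (rule trans[OF eq[OF \<psi>, symmetric] set_integral_bind_lift_kernel[OF \<eta>(1) \<psi>]])
qed

end

theorem proposition2p3:
  fixes K :: "'a::metric_space \<Rightarrow> 'a measure"
    and A :: "'a \<Rightarrow> 'a \<Rightarrow> real^'m^'m"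
    and m :: "('a \<times> 'a \<times> (real^'m^'m)) measure"
  assumes compact_Sigma: "compact (UNIV :: 'a set)"
    and kernel: "markov_kernel K"
    and cont: "weak_star_continuous K"
    and erg: "uniformly_ergodic K"
    and A_meas: "(\<lambda>(y, x). A y x) \<in> borel_measurable borel"
    and A_GL: "\<And>y x. invertible (A y x)"
    and m_prob: "m \<in> space (prob_algebra borel)"
    and m_supp: "emeasure m (UNIV \<times> UNIV \<times> PRm) = 1"
    and m_stat: "stationary (Kbar K A) m"
  shows "\<exists>\<eta>. (\<eta> \<in> space (prob_algebra borel) \<and> emeasure \<eta> (UNIV \<times> PRm) = 1 \<and>
              (\<forall>\<psi> :: 'a \<times> 'a \<times> (real^'m^'m) \<Rightarrow> real.
                 continuous_on (UNIV \<times> UNIV \<times> PRm) \<psi> \<longrightarrow>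
                 (LINT z : UNIV \<times> UNIV \<times> PRm | m. \<psi> z) =
                 (LINT q : UNIV \<times> PRm | \<eta>. (\<integral>w1. \<psi> (w1, fst q, snd q) \<partial>K (fst q)))))
           \<and> stationary (KA K A) \<eta>
           \<and> (\<forall>\<eta>'. \<eta>' \<in> space (prob_algebra borel) \<and> emeasure \<eta>' (UNIV \<times> PRm) = 1 \<and>
              (\<forall>\<psi> :: 'a \<times> 'a \<times> (real^'m^'m) \<Rightarrow> real.
                 continuous_on (UNIV \<times> UNIV \<times> PRm) \<psi> \<longrightarrow>
                 (LINT z : UNIV \<times> UNIV \<times> PRm | m. \<psi> z) =
                 (LINT q : UNIV \<times> PRm | \<eta>'. (\<integral>w1. \<psi> (w1, fst q, snd q) \<partial>K (fst q))))
              \<longrightarrow> \<eta>' = \<eta>)"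
proof -
  interpret markov_cocycle K A
    using compact_Sigma kernel A_meas A_GL by unfold_locales
  define \<eta> where "\<eta> = distr m borel (fiber_step A)"
  have sets_m: "sets m = sets borel" and prob_m: "prob_space m"
    using m_prob by (auto simp: space_prob_algebra)
  have "stationary (\<lambda>z. lift_kernel K (fiber_step A z)) m"
    using m_stat by (simp only: Kbar_eq_lift_kernel_fiber_step)
  note factorization = stationary_comp_kernel[OF measurable_fiber_step measurable_lift_kernel
      prob_m sets_m this, folded \<eta>_def]
  have m_eq: "m = \<eta> \<bind> lift_kernel K"
    by (rule factorization(1))
  have stat: "stationary (KA K A) \<eta>"
    using factorization(2) by (simp only: KA_eq_distr_lift_kernel[abs_def])
  have \<eta>_prob: "\<eta> \<in> space (prob_algebra borel)"
    unfolding \<eta>_def using prob_space.prob_space_distr[OF prob_m] measurable_fiber_step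
    by (simp add: space_prob_algebra measurable_cong_sets[OF sets_m refl])
  have \<eta>_supp: "emeasure \<eta> (UNIV \<times> PRm) = 1"
    unfolding \<eta>_def using m_prob m_supp by (rule emeasure_distr_fiber_step_PRm)
  have factor: "\<forall>\<psi> :: 'a \<times> 'a \<times> (real^'m^'m) \<Rightarrow> real. continuous_on (UNIV \<times> UNIV \<times> PRm) \<psi> \<longrightarrow>
      (LINT z : UNIV \<times> UNIV \<times> PRm | m. \<psi> z) =
      (LINT q : UNIV \<times> PRm | \<eta>. (\<integral>w1. \<psi> (w1, fst q, snd q) \<partial>K (fst q)))"
    using set_integral_bind_lift_kernel[OF \<eta>_prob] by (simp add: m_eq)
  show ?thesis
    using \<eta>_prob \<eta>_supp stat factor bind_lift_kernel_unique[OF \<eta>_prob \<eta>_supp, folded m_eq]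
    by (intro exI[of _ \<eta>]) blast
qed

end
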